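(* Let $n_0,L\in\mathbb{N}_+$, $n_1,\dots,n_L\in\mathbb{N}_+$, $h_l\in\mathrm{RL}(n_{l-1},n_l)$ for $l=1,\dots,L$, $\mathbf{h}=(h_1,\dots,h_L)$, and $\gamma\in\Gamma$. Then $\tilde{\mathcal{H}}^{(1)}(\mathcal{S}^{(1)}_{\mathbf{h}})\preceq\varphi^{(\gamma)}_{n_1}({\rm e}_{n_0})$.
   Context: $\sigma(x)=\max(0,x)$; $\mathrm{RL}(n,n')$ ($n,n'\in\mathbb{N}_+$) is the set of maps $h:\mathbb{R}^n\to\mathbb{R}^{n'}$, $h(x)_i=\sigma(\langle x,w_i\rangle+b_i)$ for some $W\in\mathbb{R}^{n'\times n}$ with rows $w_i$, $b\in\mathbb{R}^{n'}$; convention: $\mathrm{RL}(0,n')$ are constant maps $\{0\}\to\mathbb{R}^{n'}$ with $\mathcal{H}_{n'}(\mathcal{S}_h)={\rm e}_0$. Signature $S_h(x)_i=1$ iff $\langle x,w_i\rangle+b_i>0$ else $0$; $\mathcal{S}_h=\{S_h(x)\}$; $|s|=\sum_i s_i$. Multi signature $S_{\mathbf{h}}(x)=(S_{h_1}(x),S_{h_2}(h_1(x)),\dots,S_{h_L}(h_{L-1}\circ\cdots\circ h_1(x)))$, $\mathcal{S}_{\mathbf{h}}=\{S_{\mathbf{h}}(x):x\in\mathbb{R}^{n_0}\}$, and for $l\le L$, $\mathcal{S}^{(l)}_{\mathbf{h}}=\{(s_1,\dots,s_l):(s_1,\dots,s_L)\in\mathcal{S}_{\mathbf{h}}\}$.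 $V$: sequences $(v_j)_{j\in\mathbb{N}}$ of nonnegative integers with finite sum; ${\rm e}_i$ has $({\rm e}_i)_j=\delta_{ij}$; $v\preceq w$ iff $\sum_{j\ge J}v_j\le\sum_{j\ge J}w_j$ for all $J\in\mathbb{N}$; for finite families $\max_i(v^{(i)})_J=\max_i\sum_{j\ge J}v^{(i)}_j-\max_i\sum_{j\ge J+1}v^{(i)}_j$. Activation histogram $\mathcal{H}_{n'}(\mathcal{S})=(|\{s\in\mathcal{S}:|s|=j\}|)_j$. Dimension histogram: for $U\subseteq\{0,1\}^{n_1}\times\dots\times\{0,1\}^{n_l}$, $\tilde{\mathcal{H}}^{(l)}(U)=(|\{(s_1,\dots,s_l)\in U:\min(n_0,|s_1|,\dots,|s_l|)=j\}|)_{j\in\mathbb{N}}$. $\Gamma$: families $(\gamma_{n,n'})_{n'\in\mathbb{N}_+,n\in\{0,\dots,n'\}}$ in $V$ with (i) $\max\{\mathcal{H}_{n'}(\mathcal{S}_h):h\in\mathrm{RL}(n,n')\}\preceq\gamma_{n,n'}$, (ii) $n\le\tilde n\le n'\Rightarrow\gamma_{n,n'}\preceq\gamma_{\tilde n,n'}$. $\mathrm{cl}_{i^*}(v)_i=v_i$ for $i<i^*$, $\sum_{j\ge i^*}v_j$ for $i=i^*$, $0$ for $i>i^*$. $\varphi^{(\gamma)}_{n'}(v)=\sum_{n=0}^\infty v_n\,\mathrm{cl}_{\min(n,n')}(\gamma_{\min(n,n'),n'})$. *)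

theory Defs
  imports Complex_Main
begin

(* Elements of V: sequences nat => nat (finite support assumed where needed). *)
definition fin_supp :: "(nat \<Rightarrow> nat) \<Rightarrow> bool" where
  "fin_supp v \<longleftrightarrow> finite {j. v j \<noteq> 0}"

definition tailsum :: "(nat \<Rightarrow> nat) \<Rightarrow> nat \<Rightarrow> nat" where
  "tailsum v J = sum v {j. J \<le> j \<and> v j \<noteq> 0}"

definition vle :: "(nat \<Rightarrow> nat) \<Rightarrow> (nat \<Rightarrow> nat) \<Rightarrow> bool" where
  "vle v w \<longleftrightarrow> (\<forall>J. tailsum v J \<le> tailsum w J)"

definition ev :: "nat \<Rightarrow> nat \<Rightarrow> nat" where
  "ev i = (\<lambda>j. if j = i then 1 else 0)"

(* max of a finite family A of elements of V *)
definition vmax :: "(nat \<Rightarrow> nat) set \<Rightarrow> nat \<Rightarrow> nat" where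
  "vmax A J = Max ((\<lambda>v. tailsum v J) ` A) - Max ((\<lambda>v. tailsum v (Suc J)) ` A)"

(* signatures in {0,1}^n are bool lists of length n; |s| *)
definition wt :: "bool list \<Rightarrow> nat" where
  "wt s = length (filter id s)"

(* a ReLU layer in RL(n,n') given by weights W (rows w_i = W i) and bias b;
   x \<in> R^n represented by nat => real, only coordinates < n used *)
definition pre :: "nat \<Rightarrow> (nat \<Rightarrow> nat \<Rightarrow> real) \<Rightarrow> (nat \<Rightarrow> real) \<Rightarrow> (nat \<Rightarrow> real) \<Rightarrow> nat \<Rightarrow> real" where
  "pre n W b x i = (\<Sum>k<n. x k * W i k) + b i"

definition layer_out :: "nat \<Rightarrow> nat \<Rightarrow> (nat \<Rightarrow> nat \<Rightarrow> real) \<Rightarrow> (nat \<Rightarrow> real) \<Rightarrow> (nat \<Rightarrow> real) \<Rightarrow> (nat \<Rightarrow> real)" where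
  "layer_out n n' W b x = (\<lambda>i. if i < n' then max 0 (pre n W b x i) else 0)"

definition layer_sig :: "nat \<Rightarrow> nat \<Rightarrow> (nat \<Rightarrow> nat \<Rightarrow> real) \<Rightarrow> (nat \<Rightarrow> real) \<Rightarrow> (nat \<Rightarrow> real) \<Rightarrow> bool list" where
  "layer_sig n n' W b x = map (\<lambda>i. 0 < pre n W b x i) [0..<n']"

definition sigset :: "nat \<Rightarrow> nat \<Rightarrow> (nat \<Rightarrow> nat \<Rightarrow> real) \<Rightarrow> (nat \<Rightarrow> real) \<Rightarrow> bool list set" where
  "sigset n n' W b = {layer_sig n n' W b x | x. True}"

definition act_hist :: "bool list set \<Rightarrow> nat \<Rightarrow> nat" where
  "act_hist S j = card {s \<in> S. wt s = j}"

(* max{H_{n'}(S_h) : h \<in> RL(n,n')}, with the convention e_0 for n = 0 *)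
definition hist_max :: "nat \<Rightarrow> nat \<Rightarrow> nat \<Rightarrow> nat" where
  "hist_max n n' = (if n = 0 then ev 0
     else vmax {act_hist (sigset n n' W b) | W b. True})"

definition in_Gamma :: "(nat \<Rightarrow> nat \<Rightarrow> nat \<Rightarrow> nat) \<Rightarrow> bool" where
  "in_Gamma g \<longleftrightarrow>
     (\<forall>n' n. 1 \<le> n' \<and> n \<le> n' \<longrightarrow> fin_supp (g n n')) \<and>
     (\<forall>n' n. 1 \<le> n' \<and> n \<le> n' \<longrightarrow> vle (hist_max n n') (g n n')) \<and>
     (\<forall>n' n m. 1 \<le> n' \<and> n \<le> m \<and> m \<le> n' \<longrightarrow> vle (g n n') (g m n'))"

definition cl :: "nat \<Rightarrow> (nat \<Rightarrow> nat) \<Rightarrow> nat \<Rightarrow> nat" where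
  "cl i0 v i = (if i < i0 then v i else if i = i0 then tailsum v i0 else 0)"

definition phi :: "(nat \<Rightarrow> nat \<Rightarrow> nat \<Rightarrow> nat) \<Rightarrow> nat \<Rightarrow> (nat \<Rightarrow> nat) \<Rightarrow> nat \<Rightarrow> nat" where
  "phi g n' v j = (\<Sum>n\<in>{n. v n \<noteq> 0}. v n * cl (min n n') (g (min n n') n') j)"

(* multi signature: hs = [h_1,...,h_L] as (W,b) pairs, ns = [n_0,...,n_L] *)
fun msig :: "((nat \<Rightarrow> nat \<Rightarrow> real) \<times> (nat \<Rightarrow> real)) list \<Rightarrow> nat list \<Rightarrow> (nat \<Rightarrow> real) \<Rightarrow> bool list list" where
  "msig ((W, b) # hs) (n # n' # ns) x =
     layer_sig n n' W b x # msig hs (n' # ns) (layer_out n n' W b x)"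
| "msig _ _ x = []"

definition msigset :: "((nat \<Rightarrow> nat \<Rightarrow> real) \<times> (nat \<Rightarrow> real)) list \<Rightarrow> nat list \<Rightarrow> bool list list set" where
  "msigset hs ns = {msig hs ns x | x. True}"

definition msigset_l :: "nat \<Rightarrow> ((nat \<Rightarrow> nat \<Rightarrow> real) \<times> (nat \<Rightarrow> real)) list \<Rightarrow> nat list \<Rightarrow> bool list list set" where
  "msigset_l l hs ns = take l ` msigset hs ns"

definition dim_hist :: "nat \<Rightarrow> bool list list set \<Rightarrow> nat \<Rightarrow> nat" where
  "dim_hist n0 U j = card {u \<in> U. Min (insert n0 (wt ` set u)) = j}"

end

theory Submission
  imports Defs
begin

(* On the first layer the dimension histogram counts the signatures s of h_1 by min(n_0, |s|),
   while phi(e_{n_0}) = cl_m(gamma_{m,n_1}) with m = min(n_0, n_1).  Above m both tail sums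
   vanish.  For J <= m the J-th tail of the left side counts signatures with at least J active
   neurons.  The signatures of h_1 are signatures of a layer in RL(m, n_1): of h_1 itself if
   n_0 <= n_1, and of the identity layer otherwise, which realises all of {0,1}^{n_1}.  Hence the
   count is bounded by the tail of the maximal activation histogram, thus by that of gamma_{m,n_1},
   and cl_m does not change tails up to m. *)

lemma fin_supp_if_vanishing_above: "(\<And>j. N < j \<Longrightarrow> v j = 0) \<Longrightarrow> fin_supp v"
  unfolding fin_supp_def
  by (rule finite_subset[of _ "{..N}"]) (auto simp: not_less[symmetric])

lemma tailsum_eq_0: "(\<And>j. J \<le> j \<Longrightarrow> v j = 0) \<Longrightarrow> tailsum v J = 0"
  unfolding tailsum_def by (simp add: sum.neutral)

lemma tailsum_Suc:
  assumes "fin_supp v"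
  shows "tailsum v J = v J + tailsum v (Suc J)"
proof -
  have fin: "finite {j. Suc J \<le> j \<and> v j \<noteq> 0}"
    using assms unfolding fin_supp_def by (rule finite_subset[rotated]) auto
  show ?thesis
  proof (cases "v J = 0")
    case True
    then have "{j. J \<le> j \<and> v j \<noteq> 0} = {j. Suc J \<le> j \<and> v j \<noteq> 0}"
      by (auto simp: le_eq_less_or_eq Suc_le_eq)
    then show ?thesis using True by (simp add: tailsum_def)
  next
    case False
    then have "{j. J \<le> j \<and> v j \<noteq> 0} = insert J {j. Suc J \<le> j \<and> v j \<noteq> 0}"
      by (auto simp: le_eq_less_or_eq Suc_le_eq)
    then show ?thesis using fin by (simp add: tailsum_def)
  qed
qed

lemma tailsum_card_fibres:
  assumes "finite S"
  shows "tailsum (\<lambda>j. card {s\<in>S. k s = j}) J = card {s\<in>S. J \<le> k s}"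
proof -
  define T where "T = k ` {s\<in>S. J \<le> k s}"
  have supp: "{j. J \<le> j \<and> card {s\<in>S. k s = j} \<noteq> 0} = T"
    using assms by (auto simp: T_def card_eq_0_iff)
  have "{s\<in>S. J \<le> k s} = (\<Union>j\<in>T. {s\<in>S. k s = j})"
    by (auto simp: T_def)
  moreover have "card (\<Union>j\<in>T. {s\<in>S. k s = j}) = (\<Sum>j\<in>T. card {s\<in>S. k s = j})"
    by (rule card_UN_disjoint) (use assms in \<open>auto simp: T_def\<close>)
  ultimately show ?thesis unfolding tailsum_def supp by simp
qed

lemma tailsum_cl_le:
  assumes "fin_supp v" "J \<le> m"
  shows "tailsum (cl m v) J = tailsum v J"
proof -
  have fin: "fin_supp (cl m v)"
    by (rule fin_supp_if_vanishing_above[of m]) (simp add: cl_def)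
  show ?thesis
    using assms(2)
  proof (induction J rule: inc_induct)
    case base
    have "tailsum (cl m v) (Suc m) = 0" by (rule tailsum_eq_0) (simp add: cl_def)
    moreover have "cl m v m = tailsum v m" by (simp add: cl_def)
    ultimately show ?case using tailsum_Suc[OF fin, of m] by simp
  next
    case (step i)
    then have "cl m v i = v i" by (simp add: cl_def)
    then show ?case using step tailsum_Suc[OF fin, of i] tailsum_Suc[OF assms(1), of i]
      by simp
  qed
qed

lemma tailsum_vmax:
  assumes fin: "finite A" and ne: "A \<noteq> {}"
    and vanish: "\<And>v j. v \<in> A \<Longrightarrow> N < j \<Longrightarrow> v j = 0"
  shows "tailsum (vmax A) J = Max ((\<lambda>v. tailsum v J) ` A)"
proof -
  define M where "M j = Max ((\<lambda>v. tailsum v j) ` A)" for j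
  have fin_supp_A: "fin_supp v" if "v \<in> A" for v
    using vanish[OF that] by (rule fin_supp_if_vanishing_above)
  have M_eq_0: "M j = 0" if "N < j" for j
  proof -
    have "(\<lambda>v. tailsum v j) ` A = (\<lambda>v. 0) ` A"
      using vanish that by (auto intro!: image_cong tailsum_eq_0)
    also have "\<dots> = {0}" using ne by auto
    finally have "(\<lambda>v. tailsum v j) ` A = {0}" .
    then show ?thesis by (simp add: M_def)
  qed
  have M_Suc_le: "M (Suc j) \<le> M j" for j
    unfolding M_def
  proof (rule Max.boundedI)
    fix a assume "a \<in> (\<lambda>v. tailsum v (Suc j)) ` A"
    then obtain v where v: "v \<in> A" "a = tailsum v (Suc j)" by auto
    have "a \<le> tailsum v j" using tailsum_Suc[OF fin_supp_A[OF v(1)], of j] v(2) by simp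
    also have "\<dots> \<le> Max ((\<lambda>v. tailsum v j) ` A)" using fin v(1) by simp
    finally show "a \<le> Max ((\<lambda>v. tailsum v j) ` A)" .
  qed (use fin ne in auto)
  have vmax_eq: "vmax A j = M j - M (Suc j)" for j by (simp add: vmax_def M_def)
  have fin_vmax: "fin_supp (vmax A)"
    by (rule fin_supp_if_vanishing_above[of N]) (simp add: vmax_eq M_eq_0)
  have "tailsum (vmax A) J = M J"
  proof (cases "J \<le> Suc N")
    case True
    then show ?thesis
    proof (induction J rule: inc_induct)
      case base
      show ?case by (rule trans[OF tailsum_eq_0]) (auto simp: vmax_eq M_eq_0)
    next
      case (step i)
      then show ?case using tailsum_Suc[OF fin_vmax, of i] M_Suc_le[of i] vmax_eq[of i] by simp
    qed
  next
    case False
    then show ?thesis by (subst tailsum_eq_0) (auto simp: vmax_eq M_eq_0)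
  qed
  then show ?thesis by (simp add: M_def)
qed

lemma sigset_eq_range: "sigset n n' W b = range (layer_sig n n' W b)"
  by (auto simp: sigset_def)

lemma sigset_subset_lists: "sigset n n' W b \<subseteq> {s. length s = n'}"
  by (auto simp: sigset_def layer_sig_def)

lemma finite_bool_lists_length: "finite {s :: bool list. length s = n}"
  using finite_lists_length_eq[of "UNIV :: bool set" n] by simp

lemma finite_sigset: "finite (sigset n n' W b)"
  by (rule finite_subset[OF sigset_subset_lists finite_bool_lists_length])

lemma wt_le_length: "wt s \<le> length s"
  unfolding wt_def by (rule length_filter_le)

lemma act_hist_sigset_eq_0:
  assumes "n' < j"
  shows "act_hist (sigset n n' W b) j = 0"
proof -
  have "wt s \<le> n'" if "s \<in> sigset n n' W b" for s
    using sigset_subset_lists[of n n' W b] wt_le_length[of s] that by auto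
  then have "{s \<in> sigset n n' W b. wt s = j} = {}"
    using assms by fastforce
  then show ?thesis unfolding act_hist_def by (metis card.empty)
qed

lemma tailsum_act_hist_le_hist_max:
  assumes "0 < n"
  shows "tailsum (act_hist (sigset n n' W b)) J \<le> tailsum (hist_max n n') J"
proof -
  define A where "A = {act_hist (sigset n n' W b) | W b. True}"
  have "A \<subseteq> act_hist ` Pow {s. length s = n'}"
    using sigset_subset_lists by (auto simp: A_def)
  then have fin: "finite A"
    by (rule finite_subset) (simp add: finite_bool_lists_length)
  have mem: "act_hist (sigset n n' W b) \<in> A" by (auto simp: A_def)
  have vanish: "v j = 0" if "v \<in> A" "n' < j" for v j
    using that act_hist_sigset_eq_0 by (auto simp: A_def)
  have "tailsum (hist_max n n') J = tailsum (vmax A) J"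
    using assms by (simp add: hist_max_def A_def)
  also have "\<dots> = Max ((\<lambda>v. tailsum v J) ` A)"
    using fin mem vanish by (intro tailsum_vmax) auto
  finally show ?thesis using fin mem by simp
qed

lemma sigset_identity_layer:
  "sigset n n (\<lambda>i k. if i = k then 1 else 0) (\<lambda>_. 0) = {s. length s = n}"
proof
  show "{s. length s = n} \<subseteq> sigset n n (\<lambda>i k. if i = k then 1 else 0) (\<lambda>_. 0)"
  proof
    fix s :: "bool list" assume "s \<in> {s. length s = n}"
    define x :: "nat \<Rightarrow> real" where "x i = (if s ! i then 1 else 0)" for i
    have "pre n (\<lambda>i k. if i = k then 1 else 0) (\<lambda>_. 0) x i = x i" if "i < n" for i
    proof -
      have "(\<Sum>k<n. x k * (if i = k then 1 else 0)) = (\<Sum>k\<in>{i}. x k)"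
        using that by (intro sum.mono_neutral_cong_right) auto
      then show ?thesis by (simp add: pre_def)
    qed
    then have "layer_sig n n (\<lambda>i k. if i = k then 1 else 0) (\<lambda>_. 0) x = s"
      using \<open>s \<in> {s. length s = n}\<close> by (intro nth_equalityI) (auto simp: layer_sig_def x_def)
    then show "s \<in> sigset n n (\<lambda>i k. if i = k then 1 else 0) (\<lambda>_. 0)"
      unfolding sigset_def by blast
  qed
qed (rule sigset_subset_lists)

lemma sigset_subset_sigset_min_dim:
  obtains W' b' where "sigset n n' W b \<subseteq> sigset (min n n') n' W' b'"
proof (cases "n \<le> n'")
  case True
  then show ?thesis using that[of W b] by simp
next
  case False
  then show ?thesis
    using that[of "\<lambda>i k. if i = k then 1 else 0" "\<lambda>_. 0"] sigset_subset_lists[of n n' W b]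
    by (simp add: sigset_identity_layer)
qed

lemma vle_first_layer_hist:
  assumes "in_Gamma g" "0 < n" "0 < n'"
  shows "vle (\<lambda>j. card {s \<in> sigset n n' W b. min n (wt s) = j}) (cl (min n n') (g (min n n') n'))"
  unfolding vle_def
proof
  fix J
  define m where "m = min n n'"
  have fin_supp_g: "fin_supp (g m n')" and hist_max_le: "vle (hist_max m n') (g m n')"
    using assms(1,3) unfolding in_Gamma_def m_def by auto
  obtain W' b' where sub: "sigset n n' W b \<subseteq> sigset m n' W' b'"
    unfolding m_def by (rule sigset_subset_sigset_min_dim)
  have "tailsum (\<lambda>j. card {s \<in> sigset n n' W b. min n (wt s) = j}) J
        = card {s \<in> sigset n n' W b. J \<le> min n (wt s)}"
    by (rule tailsum_card_fibres[OF finite_sigset])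
  also have "\<dots> \<le> tailsum (cl m (g m n')) J"
  proof (cases "J \<le> m")
    case True
    have "card {s \<in> sigset n n' W b. J \<le> min n (wt s)} \<le> card {s \<in> sigset m n' W' b'. J \<le> wt s}"
      by (rule card_mono) (use sub finite_sigset in auto)
    also have "\<dots> = tailsum (act_hist (sigset m n' W' b')) J"
      unfolding act_hist_def[abs_def] by (rule tailsum_card_fibres[symmetric, OF finite_sigset])
    also have "\<dots> \<le> tailsum (hist_max m n') J"
      by (rule tailsum_act_hist_le_hist_max) (use assms in \<open>simp add: m_def\<close>)
    also have "\<dots> \<le> tailsum (g m n') J" using hist_max_le by (simp add: vle_def)
    also have "\<dots> = tailsum (cl m (g m n')) J" by (rule tailsum_cl_le[OF fin_supp_g True, symmetric])
    finally show ?thesis .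
  next
    case False
    have "min n (wt s) \<le> m" if "s \<in> sigset n n' W b" for s
      using sigset_subset_lists[of n n' W b] wt_le_length[of s] that unfolding m_def by auto
    then have "{s \<in> sigset n n' W b. J \<le> min n (wt s)} = {}" using False by fastforce
    then show ?thesis by (metis card.empty le0)
  qed
  finally show "tailsum (\<lambda>j. card {s \<in> sigset n n' W b. min n (wt s) = j}) J
      \<le> tailsum (cl (min n n') (g (min n n') n')) J" by (simp add: m_def)
qed

lemma msigset_eq_range: "msigset hs ns = range (msig hs ns)"
  by (auto simp: msigset_def)

lemma msigset_l_1:
  "msigset_l 1 ((W, b) # hs) (n # n' # ns) = (\<lambda>s. [s]) ` sigset n n' W b"
  unfolding msigset_l_def msigset_eq_range sigset_eq_range image_image by simp

lemma dim_hist_singletons: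
  "dim_hist n ((\<lambda>s. [s]) ` S) = (\<lambda>j. card {s \<in> S. min n (wt s) = j})"
proof
  fix j
  have "{u \<in> (\<lambda>s. [s]) ` S. Min (insert n (wt ` set u)) = j} = (\<lambda>s. [s]) ` {s \<in> S. min n (wt s) = j}"
    by auto
  then show "dim_hist n ((\<lambda>s. [s]) ` S) j = card {s \<in> S. min n (wt s) = j}"
    unfolding dim_hist_def by (simp add: card_image inj_on_def)
qed

lemma phi_ev: "phi g n' (ev n) = cl (min n n') (g (min n n') n')"
proof
  fix j
  have "{k. ev n k \<noteq> 0} = {n}" by (auto simp: ev_def)
  then show "phi g n' (ev n) j = cl (min n n') (g (min n n') n') j"
    by (simp add: phi_def ev_def)
qed

theorem mainTheorem3:
  fixes ns :: "nat list"
    and hs :: "((nat \<Rightarrow> nat \<Rightarrow> real) \<times> (nat \<Rightarrow> real)) list"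
    and g :: "nat \<Rightarrow> nat \<Rightarrow> nat \<Rightarrow> nat"
  assumes "length hs \<ge> 1"
    and "length ns = length hs + 1"
    and "\<forall>n\<in>set ns. 0 < n"
    and "in_Gamma g"
  shows "vle (dim_hist (ns ! 0) (msigset_l 1 hs ns)) (phi g (ns ! 1) (ev (ns ! 0)))"
proof -
  obtain W b hs' where hs: "hs = (W, b) # hs'"
    using assms(1) by (cases hs) auto
  obtain n0 n1 ns' where ns: "ns = n0 # n1 # ns'"
    using assms(2) hs by (cases ns; cases "tl ns") auto
  have "0 < n0" "0 < n1" using assms(3) ns by auto
  then show ?thesis
    unfolding hs ns msigset_l_1 dim_hist_singletons phi_ev
    by (simp add: vle_first_layer_hist[OF assms(4)])
qed

end
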